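(* Let $X\in\mathbb R^{m\times N}$ have rank $m<N$ with singular values $\sigma_1\ge\cdots\ge\sigma_m>0$, and let $w\in\mathbb R^N$ have i.i.d. $\mathcal N(0,1)$ entries. Let $p\in\mathbb N$, $p\ge2$, $\epsilon\in(0,1)$, and $\widetilde X=X+E\in\mathbb R^{m\times N}$ with $\|E\|_2\le\epsilon\sigma_1<\sigma_m$. Then with probability at least $1-2/N^{p-1}$, every minimizer $\widetilde w$ of $\|z\|_\infty$ subject to $\widetilde Xz=Xw$ satisfies $$\|\widetilde w\|_\infty\le\frac{\sigma_1}{\sigma_m-\epsilon\sigma_1}\sqrt{2p\log N}.$$
   Context: $\|\cdot\|_2$ of a matrix is the spectral norm. *)

theory Defs
  imports "HOL-Analysis.Analysis" "HOL-Probability.Probability"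
begin

definition spec_norm :: "real^'n^'m \<Rightarrow> real" where
  "spec_norm A = onorm (\<lambda>x. A *v x)"

definition gram_eigenvalues :: "real^'n^'m \<Rightarrow> real set" where
  "gram_eigenvalues X = {c. \<exists>v::real^'m. v \<noteq> 0 \<and> (X ** transpose X) *v v = c *\<^sub>R v}"

text \<open>For X with m \<le> N rows, the singular values of X are the square roots of the
  eigenvalues of X X^T. Largest singular value sigma_1 and smallest sigma_m:\<close>
definition sigma_max :: "real^'n^'m \<Rightarrow> real" where
  "sigma_max X = sqrt (Max (gram_eigenvalues X))"

definition sigma_min :: "real^'n^'m \<Rightarrow> real" where
  "sigma_min X = sqrt (Min (gram_eigenvalues X))"

definition linf_norm :: "real^'n \<Rightarrow> real" where
  "linf_norm z = Max (range (\<lambda>i. \<bar>z $ i\<bar>))"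

definition gauss_vec :: "('n::finite \<Rightarrow> real) measure" where
  "gauss_vec = PiM UNIV (\<lambda>_. density lborel std_normal_density)"

end

theory Submission
  imports Defs
begin

text \<open>Let \<open>d = \<sigma>\<^sub>m - \<epsilon>\<sigma>\<^sub>1\<close>. Weyl's inequality gives \<open>\<parallel>(X + E)\<^sup>T v\<parallel> \<ge> d \<parallel>v\<parallel>\<close>, so
  \<open>R = (X + E)\<^sup>T G\<^sup>-\<^sup>1\<close> with \<open>G = (X + E)(X + E)\<^sup>T\<close> is a right inverse of \<open>X + E\<close> with
  \<open>\<parallel>R\<parallel>\<^sub>2 \<le> 1/d\<close>. Hence \<open>z = R X w\<close> is feasible and the rows \<open>r\<^sub>i\<close> of \<open>R X\<close> satisfy
  \<open>\<parallel>r\<^sub>i\<parallel> \<le> K = \<sigma>\<^sub>1/d\<close>. Each \<open>z\<^sub>i = \<langle>r\<^sub>i, w\<rangle>\<close> is a centred Gaussian of variance at most \<open>K\<^sup>2\<close>,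
  so a Chernoff bound gives \<open>P(|z\<^sub>i| > K t) \<le> 2 exp(-t\<^sup>2/2) = 2/N\<^sup>p\<close> for \<open>t = sqrt(2 p ln N)\<close>.
  A union bound over the \<open>N\<close> coordinates shows \<open>\<parallel>z\<parallel>\<^sub>\<infinity> \<le> K t\<close> with probability at least
  \<open>1 - 2/N\<^sup>p\<^sup>-\<^sup>1\<close>, and every minimizer has \<open>\<infinity>\<close>-norm at most \<open>\<parallel>z\<parallel>\<^sub>\<infinity>\<close>.\<close>

section \<open>Gaussian tail bounds\<close>

lemma prob_space_std_normal: "prob_space (density lborel std_normal_density)"
  using prob_space_normal_density[of 1 0] by simp

lemma prob_space_gauss_vec: "prob_space (gauss_vec :: ('n::finite \<Rightarrow> real) measure)"
  unfolding gauss_vec_def by (intro prob_space_PiM prob_space_std_normal)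

lemma space_gauss_vec: "space (gauss_vec :: ('n::finite \<Rightarrow> real) measure) = UNIV"
  unfolding gauss_vec_def by (simp add: space_PiM)

lemma std_normal_mgf:
  "(\<integral>\<^sup>+x. ennreal (exp (c * x)) \<partial>density lborel std_normal_density) = ennreal (exp (c\<^sup>2 / 2))"
proof -
  have complete_square: "std_normal_density x * exp (c * x) = exp (c\<^sup>2 / 2) * normal_density c 1 x" for x
    unfolding normal_density_def by (simp add: mult_exp_exp power2_eq_square field_simps)
  have normal_total: "(\<integral>\<^sup>+x. ennreal (normal_density c 1 x) \<partial>lborel) = 1"
  proof -
    interpret prob_space "density lborel (normal_density c 1)"
      using prob_space_normal_density[of 1 c] by simp
    show ?thesis using emeasure_space_1 by (simp add: emeasure_density)
  qed
  have "(\<integral>\<^sup>+x. ennreal (exp (c * x)) \<partial>density lborel std_normal_density)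
      = (\<integral>\<^sup>+x. ennreal (exp (c\<^sup>2 / 2)) * ennreal (normal_density c 1 x) \<partial>lborel)"
    by (subst nn_integral_density)
       (auto intro!: nn_integral_cong simp: ennreal_mult'[symmetric] complete_square)
  also have "\<dots> = ennreal (exp (c\<^sup>2 / 2))"
    by (subst nn_integral_cmult) (auto simp: normal_total)
  finally show ?thesis .
qed

lemma inner_vec_lambda: "a \<bullet> vec_lambda w = (\<Sum>j\<in>UNIV. a $ j * w j)"
  by (simp add: inner_vec_def)

lemma measurable_inner_vec_lambda [measurable]:
  fixes a :: "real^'n::finite"
  shows "(\<lambda>w. a \<bullet> vec_lambda w) \<in> borel_measurable (gauss_vec :: ('n \<Rightarrow> real) measure)"
  unfolding inner_vec_lambda gauss_vec_def by measurable

lemma power2_norm_vec_eq_sum: "(norm a)\<^sup>2 = (\<Sum>j\<in>UNIV. (a $ j)\<^sup>2)"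
  unfolding power2_norm_eq_inner inner_vec_def by (simp add: power2_eq_square)

lemma gauss_vec_mgf:
  fixes a :: "real^'n::finite"
  shows "(\<integral>\<^sup>+w. ennreal (exp (a \<bullet> vec_lambda w)) \<partial>(gauss_vec :: ('n \<Rightarrow> real) measure))
       = ennreal (exp ((norm a)\<^sup>2 / 2))"
proof -
  interpret product_sigma_finite "\<lambda>_::'n. density lborel std_normal_density"
    unfolding product_sigma_finite_def
    using prob_space_std_normal prob_space_imp_sigma_finite by blast
  have "(\<integral>\<^sup>+w. ennreal (exp (a \<bullet> vec_lambda w)) \<partial>(gauss_vec :: ('n \<Rightarrow> real) measure))
      = (\<integral>\<^sup>+w. (\<Prod>j\<in>UNIV. ennreal (exp (a $ j * w j)))
           \<partial>PiM UNIV (\<lambda>_::'n. density lborel std_normal_density))"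
    unfolding gauss_vec_def inner_vec_lambda
    by (intro nn_integral_cong) (simp add: exp_sum prod_ennreal)
  also have "\<dots> = (\<Prod>j\<in>UNIV. ennreal (exp ((a $ j)\<^sup>2 / 2)))"
    by (subst product_nn_integral_prod) (auto simp: std_normal_mgf)
  also have "\<dots> = ennreal (exp ((norm a)\<^sup>2 / 2))"
    by (simp add: prod_ennreal exp_sum[symmetric] sum_divide_distrib power2_norm_vec_eq_sum)
  finally show ?thesis .
qed

lemma sets_gauss_vec_inner_less:
  fixes a :: "real^'n::finite"
  shows "{w. c < a \<bullet> vec_lambda w} \<in> sets (gauss_vec :: ('n \<Rightarrow> real) measure)"
proof -
  have "{w. c < a \<bullet> vec_lambda w} = {w \<in> space (gauss_vec :: ('n \<Rightarrow> real) measure). c < a \<bullet> vec_lambda w}"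
    by (simp add: space_gauss_vec)
  also have "\<dots> \<in> sets gauss_vec" by measurable
  finally show ?thesis .
qed

lemma gauss_vec_tail:
  fixes a :: "real^'n::finite"
  assumes "0 \<le> t"
  shows "measure (gauss_vec :: ('n \<Rightarrow> real) measure) {w. norm a * t < a \<bullet> vec_lambda w}
           \<le> exp (- t\<^sup>2 / 2)"
proof (cases "a = 0")
  case False
  interpret prob_space "gauss_vec :: ('n \<Rightarrow> real) measure" by (rule prob_space_gauss_vec)
  define S where "S = {w. norm a * t < a \<bullet> vec_lambda w}"
  define c where "c = t / norm a"
  have c_nonneg: "0 \<le> c" unfolding c_def using assms by simp
  have chernoff: "indicator S w \<le> ennreal (exp (- t\<^sup>2)) * ennreal (exp ((c *\<^sub>R a) \<bullet> vec_lambda w))"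
    for w
  proof (cases "w \<in> S")
    case True
    have "t\<^sup>2 = c * (norm a * t)" unfolding c_def using False by (simp add: power2_eq_square)
    also have "\<dots> \<le> c * (a \<bullet> vec_lambda w)"
      using True c_nonneg by (intro mult_left_mono) (auto simp: S_def)
    finally have "1 \<le> exp (- t\<^sup>2) * exp ((c *\<^sub>R a) \<bullet> vec_lambda w)"
      by (simp add: mult_exp_exp)
    then show ?thesis using True by (simp add: ennreal_mult'[symmetric])
  qed simp
  have "emeasure gauss_vec S = (\<integral>\<^sup>+w. indicator S w \<partial>gauss_vec)"
    by (simp add: S_def sets_gauss_vec_inner_less)
  also have "\<dots> \<le> (\<integral>\<^sup>+w. ennreal (exp (- t\<^sup>2)) * ennreal (exp ((c *\<^sub>R a) \<bullet> vec_lambda w)) \<partial>gauss_vec)"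
    by (intro nn_integral_mono chernoff)
  also have "\<dots> = ennreal (exp (- t\<^sup>2)) * ennreal (exp ((norm (c *\<^sub>R a))\<^sup>2 / 2))"
    using gauss_vec_mgf[of "c *\<^sub>R a"] by (simp add: nn_integral_cmult)
  also have "(norm (c *\<^sub>R a))\<^sup>2 = t\<^sup>2"
    using False c_nonneg unfolding c_def by (simp add: power_divide)
  also have "ennreal (exp (- t\<^sup>2)) * ennreal (exp (t\<^sup>2 / 2)) = ennreal (exp (- t\<^sup>2 / 2))"
    by (simp add: ennreal_mult'[symmetric] mult_exp_exp)
  finally show ?thesis unfolding S_def by (simp add: emeasure_eq_measure ennreal_le_iff)
qed simp

lemma gauss_vec_abs_tail:
  fixes a :: "real^'n::finite"
  assumes "norm a \<le> K" and "0 \<le> t"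
  shows "measure (gauss_vec :: ('n \<Rightarrow> real) measure) {w. K * t < \<bar>a \<bullet> vec_lambda w\<bar>}
           \<le> 2 * exp (- t\<^sup>2 / 2)"
proof -
  interpret prob_space "gauss_vec :: ('n \<Rightarrow> real) measure" by (rule prob_space_gauss_vec)
  have "{w. K * t < \<bar>a \<bullet> vec_lambda w\<bar>}
      \<subseteq> {w. norm a * t < a \<bullet> vec_lambda w} \<union> {w. norm (- a) * t < (- a) \<bullet> vec_lambda w}"
    using mult_right_mono[OF assms] by auto
  then have "prob {w. K * t < \<bar>a \<bullet> vec_lambda w\<bar>}
      \<le> prob {w. norm a * t < a \<bullet> vec_lambda w} + prob {w. norm (- a) * t < (- a) \<bullet> vec_lambda w}"
    by (intro order_trans[OF finite_measure_mono measure_Un_le] sets_gauss_vec_inner_less sets.Un)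
  also have "\<dots> \<le> 2 * exp (- t\<^sup>2 / 2)"
    using gauss_vec_tail[OF assms(2), of a] gauss_vec_tail[OF assms(2), of "- a"] by simp
  finally show ?thesis .
qed

lemma linf_norm_le_iff: "linf_norm z \<le> c \<longleftrightarrow> (\<forall>i. \<bar>z $ i\<bar> \<le> c)"
  unfolding linf_norm_def by simp

lemma gauss_vec_linf_bound:
  fixes M :: "real^'n::finite^'k::finite"
  assumes "\<And>i. norm (M $ i) \<le> K" and "0 \<le> t"
  defines "G \<equiv> {w. linf_norm (M *v vec_lambda w) \<le> K * t}"
  shows "G \<in> sets (gauss_vec :: ('n \<Rightarrow> real) measure)"
    and "1 - 2 * real CARD('k) * exp (- t\<^sup>2 / 2) \<le> measure (gauss_vec :: ('n \<Rightarrow> real) measure) G"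
proof -
  interpret prob_space "gauss_vec :: ('n \<Rightarrow> real) measure" by (rule prob_space_gauss_vec)
  define B where "B i = {w. K * t < \<bar>M $ i \<bullet> vec_lambda w\<bar>}" for i
  have B_sets: "B i \<in> events" for i
  proof -
    have B_split: "B i = {w. K * t < M $ i \<bullet> vec_lambda w} \<union> {w. K * t < (- M $ i) \<bullet> vec_lambda w}"
      unfolding B_def by auto
    show ?thesis unfolding B_split by (intro sets.Un sets_gauss_vec_inner_less)
  qed
  have G_eq: "G = space gauss_vec - (\<Union>i. B i)"
    unfolding G_def B_def linf_norm_le_iff space_gauss_vec
    by (auto simp: matrix_vector_mul_component not_less dest: leD)
  show "G \<in> events" unfolding G_eq using B_sets by auto
  have "prob (\<Union>i. B i) \<le> (\<Sum>i\<in>UNIV. prob (B i))"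
    using B_sets by (intro finite_measure_subadditive_finite) auto
  also have "\<dots> \<le> (\<Sum>i\<in>(UNIV :: 'k set). 2 * exp (- t\<^sup>2 / 2))"
    unfolding B_def by (intro sum_mono gauss_vec_abs_tail assms)
  finally show "1 - 2 * real CARD('k) * exp (- t\<^sup>2 / 2) \<le> prob G"
    unfolding G_eq using B_sets by (subst prob_compl) auto
qed

section \<open>Extreme eigenvalues of the Gram matrix\<close>

lemma self_adjoint_psd_kernel:
  fixes f :: "'a::real_inner \<Rightarrow> 'a"
  assumes "linear f" and self_adjoint: "\<And>x y. f x \<bullet> y = x \<bullet> f y"
    and psd: "\<And>x. 0 \<le> f x \<bullet> x" and "f v \<bullet> v = 0"
  shows "f v = 0"
proof (rule ccontr)
  define y where "y = f v"
  define c where "c = f y \<bullet> y"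
  assume "f v \<noteq> 0"
  then have y_pos: "0 < y \<bullet> y" by (simp add: y_def)
  have c_nonneg: "0 \<le> c" unfolding c_def by (rule psd)
  define s where "s = (y \<bullet> y) / (c + 1)"
  have s_pos: "0 < s" unfolding s_def using y_pos c_nonneg by simp
  have "s * c < y \<bullet> y"
    unfolding s_def using y_pos c_nonneg by (simp add: field_simps)
  then have "s * (s * c - 2 * (y \<bullet> y)) < 0"
    using s_pos y_pos by (intro mult_pos_neg) linarith+
  moreover have "f (v - s *\<^sub>R y) \<bullet> (v - s *\<^sub>R y) = s * (s * c - 2 * (y \<bullet> y))"
  proof -
    have image: "f (v - s *\<^sub>R y) = y - s *\<^sub>R f y"
      using assms(1) by (simp add: y_def real_vector.linear_diff linear_cmul)
    have "y \<bullet> v = 0" "f y \<bullet> v = y \<bullet> y"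
      using assms(4) self_adjoint[of y v] by (simp_all add: y_def inner_commute)
    then show ?thesis
      unfolding image by (simp add: inner_diff_left inner_diff_right c_def algebra_simps)
  qed
  ultimately show False using psd[of "v - s *\<^sub>R y"] by simp
qed

lemma finite_eigenvalues_self_adjoint:
  fixes f :: "'a::euclidean_space \<Rightarrow> 'a"
  assumes self_adjoint: "\<And>x y. f x \<bullet> y = x \<bullet> f y"
  shows "finite {c. \<exists>v. v \<noteq> 0 \<and> f v = c *\<^sub>R v}"
proof -
  define S where "S = {c. \<exists>v. v \<noteq> 0 \<and> f v = c *\<^sub>R v}"
  define ev where "ev c = (SOME v. v \<noteq> 0 \<and> f v = c *\<^sub>R v)" for c
  have ev: "ev c \<noteq> 0" "f (ev c) = c *\<^sub>R ev c" if "c \<in> S" for c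
    using someI_ex[of "\<lambda>v. v \<noteq> 0 \<and> f v = c *\<^sub>R v"] that unfolding S_def ev_def by auto
  have orthogonal: "ev c \<bullet> ev d = 0" if "c \<in> S" "d \<in> S" "c \<noteq> d" for c d
  proof -
    have "c * (ev c \<bullet> ev d) = d * (ev c \<bullet> ev d)"
      using self_adjoint[of "ev c" "ev d"] ev[OF that(1)] ev[OF that(2)] by simp
    then show ?thesis using that(3) by simp
  qed
  have "inj_on ev S"
    using orthogonal ev(1) by (metis inj_onI inner_eq_zero_iff)
  moreover have "independent (ev ` S)"
    using orthogonal ev(1)
    by (intro pairwise_orthogonal_independent) (auto simp: pairwise_def orthogonal_def)
  ultimately show ?thesis
    unfolding S_def[symmetric] using independent_bound finite_imageD by blast
qed

lemma linear_norm_extremes: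
  fixes f :: "'a::euclidean_space \<Rightarrow> 'b::real_normed_vector"
  assumes "linear f"
  obtains u v where "norm u = 1" and "norm v = 1"
    and "\<And>x. norm (f u) * norm x \<le> norm (f x)" and "\<And>x. norm (f x) \<le> norm (f v) * norm x"
proof -
  let ?S = "sphere (0::'a) 1"
  obtain b :: 'a where "b \<in> Basis" using nonempty_Basis by blast
  then have "?S \<noteq> {}" by (auto intro!: exI[of _ b])
  moreover have "continuous_on ?S (\<lambda>x. norm (f x))"
    using assms by (intro continuous_intros linear_continuous_on linear_conv_bounded_linear[THEN iffD1])
  ultimately obtain u v where u: "u \<in> ?S" "\<And>x. x \<in> ?S \<Longrightarrow> norm (f u) \<le> norm (f x)"
    and v: "v \<in> ?S" "\<And>x. x \<in> ?S \<Longrightarrow> norm (f x) \<le> norm (f v)"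
    using continuous_attains_inf[OF compact_sphere] continuous_attains_sup[OF compact_sphere]
    by metis
  have homogeneous: "norm (f x) = norm x * norm (f (x /\<^sub>R norm x))" for x
    using assms by (cases "x = 0") (auto simp: linear_cmul linear_0)
  have "x /\<^sub>R norm x \<in> ?S" if "x \<noteq> 0" for x
    using that by simp
  then have "norm (f u) * norm x \<le> norm (f x)" "norm (f x) \<le> norm (f v) * norm x" for x
    using u(2)[of "x /\<^sub>R norm x"] v(2)[of "x /\<^sub>R norm x"] homogeneous[of x]
    by (cases "x = 0"; simp add: mult_left_mono linear_0[OF assms] mult.commute)+
  with that u(1) v(1) show ?thesis by simp
qed

lemma inner_matrix_vector_transpose:
  fixes A :: "real^'n^'m"
  shows "(A *v x) \<bullet> y = x \<bullet> (transpose A *v y)"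
  using dot_lmul_matrix[of x "transpose A" y] by simp

lemma inner_gram_mult:
  fixes X :: "real^'n^'m"
  shows "((X ** transpose X) *v x) \<bullet> y = (transpose X *v x) \<bullet> (transpose X *v y)"
  by (simp only: matrix_vector_mul_assoc[symmetric] inner_matrix_vector_transpose)

lemma finite_gram_eigenvalues: "finite (gram_eigenvalues X)"
  unfolding gram_eigenvalues_def
proof (rule finite_eigenvalues_self_adjoint)
  show "((X ** transpose X) *v x) \<bullet> y = x \<bullet> ((X ** transpose X) *v y)" for x y
    using inner_gram_mult[of X x y] inner_gram_mult[of X y x] by (simp add: inner_commute)
qed

lemma gram_eigenvalue_rayleigh:
  fixes X :: "real^'n^'m"
  assumes "c \<in> gram_eigenvalues X"
  obtains w where "norm w = 1" and "c = (norm (transpose X *v w))\<^sup>2"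
proof -
  obtain v where v: "v \<noteq> 0" "(X ** transpose X) *v v = c *\<^sub>R v"
    using assms unfolding gram_eigenvalues_def by blast
  define w where "w = v /\<^sub>R norm v"
  have w_unit: "norm w = 1" using v(1) by (simp add: w_def)
  have "(X ** transpose X) *v w = c *\<^sub>R w"
    unfolding w_def by (simp add: matrix_vector_mult_scaleR v(2))
  then have "c = ((X ** transpose X) *v w) \<bullet> w"
    using w_unit by (simp add: dot_square_norm)
  also have "\<dots> = (norm (transpose X *v w))\<^sup>2"
    by (simp add: inner_gram_mult power2_norm_eq_inner)
  finally show ?thesis using that w_unit by blast
qed

text \<open>For \<open>s = 1\<close> (\<open>s = -1\<close>) the hypothesis says that \<open>v\<close> maximizes (minimizes) the
  Rayleigh quotient \<open>\<parallel>X\<^sup>T x\<parallel>\<^sup>2 / \<parallel>x\<parallel>\<^sup>2\<close>.\<close>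
lemma gram_eigenvalue_of_rayleigh_extremum:
  fixes X :: "real^'n^'m"
  assumes "v \<noteq> 0" and "(norm (transpose X *v v))\<^sup>2 = l * (norm v)\<^sup>2" and "s \<noteq> 0"
    and "\<And>x. 0 \<le> s * (l * (norm x)\<^sup>2 - (norm (transpose X *v x))\<^sup>2)"
  shows "l \<in> gram_eigenvalues X"
proof -
  define f where "f x = s *\<^sub>R (l *\<^sub>R x - (X ** transpose X) *v x)" for x
  have quadratic_form: "f x \<bullet> y = s * (l * (x \<bullet> y) - (transpose X *v x) \<bullet> (transpose X *v y))" for x y
    unfolding f_def by (simp add: inner_diff_left inner_gram_mult)
  have "f v = 0"
  proof (rule self_adjoint_psd_kernel[of f])
    show "linear f"
      unfolding f_def linear_iff
      by (simp add: matrix_vector_right_distrib matrix_vector_mult_scaleR algebra_simps)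
    show "f x \<bullet> y = x \<bullet> f y" for x y
      using quadratic_form[of x y] quadratic_form[of y x] by (simp add: inner_commute)
    show "0 \<le> f x \<bullet> x" for x
      using assms(4)[of x] by (simp add: quadratic_form power2_norm_eq_inner)
    show "f v \<bullet> v = 0"
      using assms(2) by (simp add: quadratic_form power2_norm_eq_inner)
  qed
  then show ?thesis
    using assms(1,3) unfolding f_def gram_eigenvalues_def by auto
qed

lemma gram_eigenvalues_Min_Max:
  fixes X :: "real^'n^'m"
  obtains u v where
    "Min (gram_eigenvalues X) = (norm (transpose X *v u))\<^sup>2"
    "\<And>x. norm (transpose X *v u) * norm x \<le> norm (transpose X *v x)"
    "Max (gram_eigenvalues X) = (norm (transpose X *v v))\<^sup>2"
    "\<And>x. norm (transpose X *v x) \<le> norm (transpose X *v v) * norm x"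
proof -
  obtain u v :: "real^'m" where u: "norm u = 1" "\<And>x. norm (transpose X *v u) * norm x \<le> norm (transpose X *v x)"
    and v: "norm v = 1" "\<And>x. norm (transpose X *v x) \<le> norm (transpose X *v v) * norm x"
    using linear_norm_extremes[OF bounded_linear.linear[OF matrix_vector_mul_bounded_linear]] by metis
  have u_eig: "(norm (transpose X *v u))\<^sup>2 \<in> gram_eigenvalues X"
  proof (rule gram_eigenvalue_of_rayleigh_extremum[where s = "-1" and v = u])
    show "0 \<le> -1 * ((norm (transpose X *v u))\<^sup>2 * (norm x)\<^sup>2 - (norm (transpose X *v x))\<^sup>2)" for x
      using power_mono[OF u(2)[of x]] by (simp add: power_mult_distrib)
  qed (use u(1) in auto)
  have v_eig: "(norm (transpose X *v v))\<^sup>2 \<in> gram_eigenvalues X"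
  proof (rule gram_eigenvalue_of_rayleigh_extremum[where s = 1 and v = v])
    show "0 \<le> 1 * ((norm (transpose X *v v))\<^sup>2 * (norm x)\<^sup>2 - (norm (transpose X *v x))\<^sup>2)" for x
      using power_mono[OF v(2)[of x]] by (simp add: power_mult_distrib)
  qed (use v(1) in auto)
  have between: "(norm (transpose X *v u))\<^sup>2 \<le> c \<and> c \<le> (norm (transpose X *v v))\<^sup>2"
    if c: "c \<in> gram_eigenvalues X" for c
  proof -
    obtain w where "norm w = 1" "c = (norm (transpose X *v w))\<^sup>2"
      using gram_eigenvalue_rayleigh[OF c] .
    then show ?thesis
      using power_mono[OF u(2)[of w], of 2] power_mono[OF v(2)[of w], of 2] by simp
  qed
  show ?thesis
  proof
    show "Min (gram_eigenvalues X) = (norm (transpose X *v u))\<^sup>2"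
      using finite_gram_eigenvalues u_eig between by (intro Min_eqI) auto
    show "Max (gram_eigenvalues X) = (norm (transpose X *v v))\<^sup>2"
      using finite_gram_eigenvalues v_eig between by (intro Max_eqI) auto
  qed (use u v in auto)
qed

lemma norm_transpose_mult_le_sigma_max: "norm (transpose X *v x) \<le> sigma_max X * norm x"
proof -
  obtain v where Max: "Max (gram_eigenvalues X) = (norm (transpose X *v v))\<^sup>2"
    and bound: "\<And>x. norm (transpose X *v x) \<le> norm (transpose X *v v) * norm x"
    using gram_eigenvalues_Min_Max by metis
  have "sigma_max X = norm (transpose X *v v)"
    unfolding sigma_max_def Max by simp
  with bound[of x] show ?thesis by simp
qed

lemma sigma_min_le_norm_transpose_mult: "sigma_min X * norm x \<le> norm (transpose X *v x)"
proof -
  obtain u where Min: "Min (gram_eigenvalues X) = (norm (transpose X *v u))\<^sup>2"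
    and bound: "\<And>x. norm (transpose X *v u) * norm x \<le> norm (transpose X *v x)"
    using gram_eigenvalues_Min_Max by metis
  have "sigma_min X = norm (transpose X *v u)"
    unfolding sigma_min_def Min by simp
  with bound[of x] show ?thesis by simp
qed

lemma sigma_max_nonneg: "0 \<le> sigma_max X"
  using gram_eigenvalues_Min_Max[of X] unfolding sigma_max_def by (metis real_sqrt_ge_zero zero_le_power2)

section \<open>A bounded right inverse of the perturbed matrix\<close>

lemma square_le_mult_self_imp_le:
  fixes a b :: real
  assumes "a\<^sup>2 \<le> b * a" and "0 \<le> a" and "0 \<le> b"
  shows "a \<le> b"
  using assms by (cases "a = 0") (auto simp: power2_eq_square mult_le_cancel_right)

lemma norm_mult_le_of_norm_transpose_mult_le:
  fixes A :: "real^'n^'m"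
  assumes "0 \<le> K" and "\<And>v. norm (transpose A *v v) \<le> K * norm v"
  shows "norm (A *v w) \<le> K * norm w"
proof (rule square_le_mult_self_imp_le)
  have "(norm (A *v w))\<^sup>2 = w \<bullet> (transpose A *v (A *v w))"
    by (simp only: power2_norm_eq_inner inner_matrix_vector_transpose[symmetric] inner_commute)
  also have "\<dots> \<le> norm w * norm (transpose A *v (A *v w))"
    by (rule norm_cauchy_schwarz)
  also have "\<dots> \<le> norm w * (K * norm (A *v w))"
    by (intro mult_left_mono assms(2)) simp
  finally show "(norm (A *v w))\<^sup>2 \<le> K * norm w * norm (A *v w)"
    by (simp add: mult_ac)
qed (use assms in simp_all)

lemma norm_mult_le_sigma_max: "norm (X *v w) \<le> sigma_max X * norm w"
  by (rule norm_mult_le_of_norm_transpose_mult_le[OF sigma_max_nonneg norm_transpose_mult_le_sigma_max])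

lemma norm_transpose_mult_le_spec_norm: "norm (transpose E *v v) \<le> spec_norm E * norm v"
proof (rule norm_mult_le_of_norm_transpose_mult_le)
  show "0 \<le> spec_norm E"
    unfolding spec_norm_def by (intro onorm_pos_le matrix_vector_mul_bounded_linear)
  show "norm (transpose (transpose E) *v w) \<le> spec_norm E * norm w" for w
    unfolding spec_norm_def transpose_transpose by (intro onorm matrix_vector_mul_bounded_linear)
qed

lemma transpose_add: "transpose (A + B) = transpose A + transpose B"
  by (simp add: transpose_def vec_eq_iff)

lemma norm_transpose_perturbed_ge:
  fixes X E :: "real^'n^'m"
  assumes "spec_norm E \<le> e * sigma_max X"
  shows "(sigma_min X - e * sigma_max X) * norm v \<le> norm (transpose (X + E) *v v)"
proof -
  have "norm (transpose E *v v) \<le> e * sigma_max X * norm v"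
    using norm_transpose_mult_le_spec_norm[of E v] mult_right_mono[OF assms norm_ge_zero[of v]]
    by linarith
  moreover have "norm (transpose X *v v) - norm (transpose E *v v) \<le> norm (transpose (X + E) *v v)"
    using norm_triangle_ineq2[of "transpose X *v v" "- (transpose E *v v)"]
    by (simp add: transpose_add matrix_vector_mult_add_rdistrib)
  ultimately show ?thesis
    using sigma_min_le_norm_transpose_mult[of X v] by (simp add: algebra_simps)
qed

lemma bounded_right_inverse:
  fixes Y :: "real^'n^'m"
  assumes "0 < d" and "\<And>v. d * norm v \<le> norm (transpose Y *v v)"
  obtains R :: "real^'m^'n" where "Y ** R = mat 1" and "\<And>u. norm (R *v u) \<le> norm u / d"
proof -
  define G where "G = Y ** transpose Y"
  have "u = 0" if "G *v u = 0" for u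
  proof -
    have "(norm (transpose Y *v u))\<^sup>2 = (G *v u) \<bullet> u"
      unfolding G_def inner_gram_mult power2_norm_eq_inner ..
    then have "d * norm u \<le> 0"
      using that assms(2)[of u] by simp
    then show "u = 0"
      using assms(1) by (simp add: mult_le_0_iff)
  qed
  then obtain B where "B ** G = mat 1"
    using matrix_left_invertible_ker by blast
  then have GB: "G ** B = mat 1"
    by (rule matrix_left_right_inverse[THEN iffD1])
  define R where "R = transpose Y ** B"
  have "Y ** R = mat 1"
    by (simp only: R_def matrix_mul_assoc G_def[symmetric] GB)
  moreover have "norm (R *v u) \<le> norm u / d" for u
  proof -
    define s where "s = B *v u"
    have R_s: "R *v u = transpose Y *v s"
      unfolding R_def s_def by (simp only: matrix_vector_mul_assoc)
    have G_s: "G *v s = u"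
      unfolding s_def by (simp only: matrix_vector_mul_assoc GB matrix_vector_mul_lid)
    have s_le: "norm s \<le> norm (R *v u) / d"
      using assms(2)[of s] assms(1) unfolding R_s by (simp add: field_simps)
    have "(norm (R *v u))\<^sup>2 = (G *v s) \<bullet> s"
      unfolding R_s G_def inner_gram_mult power2_norm_eq_inner ..
    also have "\<dots> = u \<bullet> s"
      unfolding G_s ..
    also have "\<dots> \<le> norm u * norm s"
      by (rule norm_cauchy_schwarz)
    also have "\<dots> \<le> norm u / d * norm (R *v u)"
      using mult_left_mono[OF s_le norm_ge_zero[of u]] by simp
    finally show ?thesis
      by (rule square_le_mult_self_imp_le) (use assms(1) in simp_all)
  qed
  ultimately show ?thesis using that by blast
qed

lemma norm_row_le:
  fixes M :: "real^'n^'k"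
  assumes "0 \<le> K" and "\<And>w. norm (M *v w) \<le> K * norm w"
  shows "norm (M $ i) \<le> K"
proof (rule square_le_mult_self_imp_le)
  have "(norm (M $ i))\<^sup>2 = (M *v M $ i) $ i"
    by (simp add: matrix_vector_mul_component power2_norm_eq_inner)
  also have "\<dots> \<le> norm (M *v M $ i)"
    using component_le_norm_cart[of "M *v M $ i" i] by simp
  also have "\<dots> \<le> K * norm (M $ i)"
    by (rule assms(2))
  finally show "(norm (M $ i))\<^sup>2 \<le> K * norm (M $ i)" .
qed (use assms in simp_all)

lemma perturbed_solution_matrix:
  fixes X E :: "real^'n^'m"
  assumes "spec_norm E \<le> e * sigma_max X" and "e * sigma_max X < sigma_min X"
  obtains M :: "real^'n^'n" where "(X + E) ** M = X"
    and "\<And>i. norm (M $ i) \<le> sigma_max X / (sigma_min X - e * sigma_max X)"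
proof -
  define d where "d = sigma_min X - e * sigma_max X"
  have d_pos: "0 < d" unfolding d_def using assms(2) by simp
  obtain R where R: "(X + E) ** R = mat 1" "\<And>u. norm (R *v u) \<le> norm u / d"
    using bounded_right_inverse[OF d_pos norm_transpose_perturbed_ge[OF assms(1), folded d_def]]
    by metis
  have "(X + E) ** (R ** X) = X"
    by (simp add: matrix_mul_assoc R(1))
  moreover have "norm ((R ** X) *v w) \<le> sigma_max X / d * norm w" for w
  proof -
    have "norm ((R ** X) *v w) \<le> norm (X *v w) / d"
      unfolding matrix_vector_mul_assoc[symmetric] by (rule R(2))
    also have "\<dots> \<le> sigma_max X * norm w / d"
      using d_pos by (intro divide_right_mono norm_mult_le_sigma_max) simp
    finally show ?thesis by simp
  qed
  then have "norm ((R ** X) $ i) \<le> sigma_max X / d" for i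
    using d_pos sigma_max_nonneg[of X] by (intro norm_row_le) simp_all
  ultimately show ?thesis using that unfolding d_def by blast
qed

theorem mainTheorem9:
  fixes X E :: "real^'n::finite^'m::finite"
    and p :: nat and \<epsilon> :: real
  assumes "rank X = CARD('m)"
    and "CARD('m) < CARD('n)"
    and "p \<ge> 2"
    and "0 < \<epsilon>" and "\<epsilon> < 1"
    and "spec_norm E \<le> \<epsilon> * sigma_max X"
    and "\<epsilon> * sigma_max X < sigma_min X"
  shows "\<exists>A \<in> sets gauss_vec.
           measure gauss_vec A \<ge> 1 - 2 / real (CARD('n)) ^ (p - 1) \<and>
           (\<forall>w \<in> A. \<forall>wt :: real^'n.
              ((X + E) *v wt = X *v vec_lambda w \<and>
               (\<forall>z. (X + E) *v z = X *v vec_lambda w \<longrightarrow> linf_norm wt \<le> linf_norm z))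
              \<longrightarrow> linf_norm wt \<le> sigma_max X / (sigma_min X - \<epsilon> * sigma_max X)
                                    * sqrt (2 * real p * ln (real CARD('n))))"
proof -
  define N where "N = real CARD('n)"
  define K where "K = sigma_max X / (sigma_min X - \<epsilon> * sigma_max X)"
  define t where "t = sqrt (2 * real p * ln N)"
  have "0 < CARD('m)"
    by simp
  then have "2 \<le> N"
    using assms(2) unfolding N_def by linarith
  then have t_nonneg: "0 \<le> t" and t_sq: "t\<^sup>2 = 2 * real p * ln N"
    unfolding t_def by simp_all
  have failure_probability: "2 * N * exp (- t\<^sup>2 / 2) = 2 / N ^ (p - 1)"
  proof -
    have "exp (- t\<^sup>2 / 2) = inverse (exp (real p * ln N))"
      by (simp add: t_sq exp_minus)
    also have "exp (real p * ln N) = N ^ p"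
      using \<open>2 \<le> N\<close> by (simp add: exp_of_nat_mult)
    also have "N ^ p = N * N ^ (p - 1)"
      using assms(3) by (cases p) simp_all
    finally show ?thesis
      using \<open>2 \<le> N\<close> by (simp add: field_simps)
  qed
  obtain M :: "real^'n^'n" where feasible: "(X + E) ** M = X" and rows: "\<And>i. norm (M $ i) \<le> K"
    using perturbed_solution_matrix[OF assms(6,7)] unfolding K_def by metis
  define A where "A = {w. linf_norm (M *v vec_lambda w) \<le> K * t}"
  have "A \<in> sets gauss_vec" and "1 - 2 / N ^ (p - 1) \<le> measure gauss_vec A"
    using gauss_vec_linf_bound[OF rows t_nonneg, folded N_def] unfolding A_def failure_probability
    by simp_all
  moreover have "linf_norm wt \<le> K * t"
    if "w \<in> A" and "\<forall>z. (X + E) *v z = X *v vec_lambda w \<longrightarrow> linf_norm wt \<le> linf_norm z"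
    for w wt
  proof -
    have "(X + E) *v (M *v vec_lambda w) = X *v vec_lambda w"
      by (metis feasible matrix_vector_mul_assoc)
    then have "linf_norm wt \<le> linf_norm (M *v vec_lambda w)"
      using that(2) by blast
    also have "\<dots> \<le> K * t"
      using that(1) unfolding A_def by simp
    finally show ?thesis .
  qed
  ultimately show ?thesis
    unfolding K_def t_def N_def by blast
qed

end
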